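(* Let $d\ge 1$, $\bm z\in\mathbb{R}^d$ and $\alpha\ge 1$, and let $\bm p^\star = \alpha\text{-entmax}(\bm z)$. Let $\mathcal S=\{i: p^\star_i>0\}$ be the support of $\bm p^\star$. Define, for $i\in\mathcal S$, $\tilde p_i = \dfrac{(p_i^\star)^{2-\alpha}}{\sum_{j\in\mathcal S}(p_j^\star)^{2-\alpha}}$ and $\tilde p_i=0$ for $i\notin\mathcal S$, and $h_i = -p_i^\star\log p_i^\star$ (with $0\log 0=0$). Then, at every $(\bm z,\alpha)$ at which $\alpha\mapsto \alpha\text{-entmax}(\bm z)$ is differentiable (for $\alpha=1$: the one-sided derivative from $\alpha\to1^+$), the $i$-th component of the Jacobian $\bm g = \partial\, \alpha\text{-entmax}(\bm z)/\partial\alpha$ is $$ g_i = \begin{cases} \dfrac{p_i^\star-\tilde p_i}{(\alpha-1)^2} + \dfrac{h_i - \tilde p_i\sum_j h_j}{\alpha-1}, & \alpha>1,\\[2ex] \dfrac{h_i\log p_i^\star - p_i^\star\sum_j h_j\log p_j^\star}{2}, & \alpha=1,\end{cases}$$ where in the $\alpha=1$ case $h_i\log p_i^\star=-p_i^\star\log^2 p_i^\star$, i.e. $g_i = \tfrac12\big(-p_i^\star\log^2p_i^\star + p_i^\star\sum_j p_j^\star\log^2 p_j^\star\big)$. In particular $g_i=0$ whenever $p_i^\star=0$.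
   Context: The probability simplex is $\triangle^d=\{\bm p\in\mathbb{R}^d: p_i\ge 0,\ \sum_i p_i=1\}$. For $\alpha\ge1$ the Tsallis entropy is $\mathsf H^{T}_\alpha(\bm p)=\frac{1}{\alpha(\alpha-1)}\sum_j (p_j-p_j^\alpha)$ for $\alpha\neq1$ and $\mathsf H^T_1(\bm p)=-\sum_j p_j\log p_j$ (Shannon entropy). The $\alpha$-entmax mapping is $\alpha\text{-entmax}(\bm z)=\arg\max_{\bm p\in\triangle^d}\ \bm p^\top\bm z+\mathsf H^T_\alpha(\bm p)$ (the maximizer is unique). For $\alpha=1$ it equals softmax; for $\alpha>1$ the solution has the form $p^\star_i=[(\alpha-1)(z_i-\tau^\star)]_+^{1/(\alpha-1)}$ for a unique scalar $\tau^\star$ ensuring $\sum_i p_i^\star=1$, where $[t]_+=\max(t,0)$. *)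

theory Defs
  imports "HOL-Analysis.Analysis"
begin

definition prob_simplex :: "('n::finite \<Rightarrow> real) set" where
  "prob_simplex = {p. (\<forall>i. p i \<ge> 0) \<and> (\<Sum>i\<in>UNIV. p i) = 1}"

text \<open>Tsallis entropy; for alpha = 1 the Shannon entropy. Note 0 * ln 0 = 0 in HOL,
  matching the convention 0 log 0 = 0.\<close>
definition tsallis :: "real \<Rightarrow> ('n::finite \<Rightarrow> real) \<Rightarrow> real" where
  "tsallis \<alpha> p = (if \<alpha> = 1 then - (\<Sum>j\<in>UNIV. p j * ln (p j))
                   else (1 / (\<alpha> * (\<alpha> - 1))) * (\<Sum>j\<in>UNIV. p j - p j powr \<alpha>))"

definition entmax :: "real \<Rightarrow> ('n::finite \<Rightarrow> real) \<Rightarrow> ('n \<Rightarrow> real)" where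
  "entmax \<alpha> z = (THE p. p \<in> prob_simplex \<and>
      (\<forall>q\<in>prob_simplex. (\<Sum>i\<in>UNIV. q i * z i) + tsallis \<alpha> q \<le> (\<Sum>i\<in>UNIV. p i * z i) + tsallis \<alpha> p))"

end

theory Submission
  imports Defs "HOL-Real_Asymp.Real_Asymp"
begin

text \<open>For \<open>\<alpha> > 1\<close> the maximiser is the thresholded map
  \<open>p\<^sub>i = [(\<alpha> - 1)(z\<^sub>i - \<tau>)]\<^sub>+\<^bsup>1/(\<alpha>-1)\<^esup>\<close>: for fixed \<open>\<tau>\<close> it maximises the objective
  coordinatewise by the strict tangent inequality for \<open>t\<^sup>\<alpha>\<close>, and \<open>\<tau>\<close> is fixed by the
  intermediate value theorem; for \<open>\<alpha> = 1\<close> it is softmax (Gibbs' inequality).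
  Hence \<open>p\<^sub>i\<^bsup>\<alpha>-1\<^esup> - p\<^sub>j\<^bsup>\<alpha>-1\<^esup> = (\<alpha> - 1)(z\<^sub>i - z\<^sub>j)\<close> on the support for every \<open>\<alpha> > 1\<close>.
  Differentiating this identity in \<open>\<alpha>\<close> determines the derivative on the support up to one
  constant, which is fixed by \<open>\<Sum>\<^sub>i g\<^sub>i = 0\<close>; off the support \<open>g\<^sub>i = 0\<close> since \<open>p\<^sub>i \<ge> 0\<close>
  attains a minimum there. At \<open>\<alpha> = 1\<close> the identity reads
  \<open>exp(\<epsilon> ln p\<^sub>i) - exp(\<epsilon> ln p\<^sub>j) = \<epsilon> (z\<^sub>i - z\<^sub>j)\<close> with \<open>\<epsilon> = \<alpha> - 1\<close>; a second-order
  expansion of \<open>exp\<close> gives the right derivative of \<open>ln p\<^sub>i - ln p\<^sub>j\<close>.\<close>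

section \<open>The maximiser\<close>

definition entmax_objective :: "real \<Rightarrow> ('n::finite \<Rightarrow> real) \<Rightarrow> ('n \<Rightarrow> real) \<Rightarrow> real" where
  "entmax_objective a z q = (\<Sum>i\<in>UNIV. q i * z i) + tsallis a q"

lemma entmax_eqI:
  fixes z p :: "'n::finite \<Rightarrow> real"
  assumes "p \<in> prob_simplex"
    and "\<And>q. q \<in> prob_simplex \<Longrightarrow> q \<noteq> p \<Longrightarrow> entmax_objective a z q < entmax_objective a z p"
  shows "entmax a z = p"
  unfolding entmax_def
proof (rule the_equality)
  show "p \<in> prob_simplex \<and> (\<forall>q\<in>prob_simplex.
          (\<Sum>i\<in>UNIV. q i * z i) + tsallis a q \<le> (\<Sum>i\<in>UNIV. p i * z i) + tsallis a p)"
  proof (intro conjI ballI)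
    fix q :: "'n \<Rightarrow> real" assume "q \<in> prob_simplex"
    then show "(\<Sum>i\<in>UNIV. q i * z i) + tsallis a q \<le> (\<Sum>i\<in>UNIV. p i * z i) + tsallis a p"
      using assms(2)[of q] unfolding entmax_objective_def by (cases "q = p") auto
  qed (fact assms(1))
next
  fix p' assume p': "p' \<in> prob_simplex \<and> (\<forall>q\<in>prob_simplex.
          (\<Sum>i\<in>UNIV. q i * z i) + tsallis a q \<le> (\<Sum>i\<in>UNIV. p' i * z i) + tsallis a p')"
  show "p' = p"
  proof (rule ccontr)
    assume "p' \<noteq> p"
    then have "entmax_objective a z p' < entmax_objective a z p"
      using assms(2) p' by blast
    moreover have "entmax_objective a z p \<le> entmax_objective a z p'"
      using p' assms(1) unfolding entmax_objective_def by blast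
    ultimately show False by simp
  qed
qed

lemma mult_ln_ratio_le:
  fixes x q :: real
  assumes "x \<ge> 0" "q > 0"
  shows "x * ln q - x * ln x \<le> q - x"
    and "x \<noteq> q \<Longrightarrow> x * ln q - x * ln x < q - x"
proof -
  have "x * ln q - x * ln x \<le> q - x \<and> (x \<noteq> q \<longrightarrow> x * ln q - x * ln x < q - x)"
  proof (cases "x = 0")
    case False
    with assms have x: "x > 0" by simp
    have "x * ln q - x * ln x = x * ln (q / x)" "q - x = x * (q / x - 1)"
      using x assms by (simp_all add: ln_div right_diff_distrib)
    moreover have "ln (q / x) \<le> q / x - 1"
      using x assms by (intro ln_le_minus_one) simp
    moreover have "ln (q / x) \<noteq> q / x - 1" if "x \<noteq> q"
      using that x assms ln_eq_minus_one[of "q / x"] by (auto simp: field_simps)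
    ultimately show ?thesis
      using x by (simp add: less_le)
  qed (use assms in simp)
  then show "x * ln q - x * ln x \<le> q - x" "x \<noteq> q \<Longrightarrow> x * ln q - x * ln x < q - x"
    by blast+
qed

lemma entmax_one: "entmax 1 z = (\<lambda>i. exp (z i) / (\<Sum>j\<in>UNIV. exp (z j)))"
proof -
  define Z where "Z = (\<Sum>j\<in>UNIV. exp (z j))"
  define p where "p i = exp (z i) / Z" for i
  have Z: "Z > 0" unfolding Z_def by (intro sum_pos) auto
  have p: "p i > 0" for i using Z by (simp add: p_def)
  have z: "z i = ln (p i) + ln Z" for i using Z by (simp add: p_def ln_div)
  have sum_p: "(\<Sum>i\<in>UNIV. p i) = 1"
    using Z by (simp add: p_def Z_def flip: sum_divide_distrib)
  have obj: "entmax_objective 1 z q = ln Z + (\<Sum>i\<in>UNIV. q i * ln (p i) - q i * ln (q i))"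
    if "(\<Sum>i\<in>UNIV. q i) = 1" for q
    using that by (simp add: entmax_objective_def tsallis_def z algebra_simps sum.distrib
        sum_subtractf flip: sum_distrib_left)
  have "entmax 1 z = p"
  proof (rule entmax_eqI)
    show p_simplex: "p \<in> prob_simplex"
      using p sum_p by (auto simp: prob_simplex_def less_imp_le)
    fix q assume q: "q \<in> prob_simplex" "q \<noteq> p"
    then obtain k where k: "q k \<noteq> p k" by auto
    have q0: "q i \<ge> 0" for i using q by (simp add: prob_simplex_def)
    have "(\<Sum>i\<in>UNIV. q i * ln (p i) - q i * ln (q i)) < (\<Sum>i\<in>UNIV. p i - q i)"
    proof (rule sum_strict_mono_ex1)
      show "\<forall>i\<in>UNIV. q i * ln (p i) - q i * ln (q i) \<le> p i - q i"
        using mult_ln_ratio_le(1)[OF q0 p] by blast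
      show "\<exists>i\<in>UNIV. q i * ln (p i) - q i * ln (q i) < p i - q i"
        using mult_ln_ratio_le(2)[OF q0 p k] by blast
    qed simp
    also have "\<dots> = (\<Sum>i\<in>UNIV. p i * ln (p i) - p i * ln (p i))"
      using q sum_p by (simp add: prob_simplex_def sum_subtractf)
    finally show "entmax_objective 1 z q < entmax_objective 1 z p"
      using q p_simplex by (simp add: obj prob_simplex_def)
  qed
  then show ?thesis by (simp add: fun_eq_iff p_def Z_def)
qed

lemma powr_tangent_less:
  fixes a x y :: real
  assumes a: "a > 1" and y: "y > 0" and x: "x \<ge> 0" and "x \<noteq> y"
  shows "a * y powr (a - 1) * (x - y) < x powr a - y powr a"
proof (cases "x = 0")
  case True
  have "y powr (a - 1) * y = y powr a" using y by (simp add: powr_diff)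
  then show ?thesis using True a y by (simp add: algebra_simps)
next
  case False
  with x have x: "x > 0" by simp
  have der: "DERIV (\<lambda>t. t powr a) t :> a * t powr (a - 1)" if "t > 0" for t
    using has_real_derivative_powr[OF that] .
  show ?thesis
  proof (cases "x < y")
    case True
    obtain c where c: "x < c" "c < y" "y powr a - x powr a = (y - x) * (a * c powr (a - 1))"
      using MVT2[OF True, of "\<lambda>t. t powr a" "\<lambda>t. a * t powr (a - 1)"] der x by force
    have "c powr (a - 1) < y powr (a - 1)"
      using c x a by (intro powr_less_mono2) auto
    then have "a * c powr (a - 1) * (y - x) < a * y powr (a - 1) * (y - x)"
      using True a by simp
    then show ?thesis using c(3) True a by (simp add: algebra_simps)
  next
    case False
    then have yx: "y < x" using assms by simp
    obtain c where c: "y < c" "c < x" "x powr a - y powr a = (x - y) * (a * c powr (a - 1))"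
      using MVT2[OF yx, of "\<lambda>t. t powr a" "\<lambda>t. a * t powr (a - 1)"] der y by force
    have "y powr (a - 1) < c powr (a - 1)"
      using c y a by (intro powr_less_mono2) auto
    then have "a * y powr (a - 1) * (x - y) < a * c powr (a - 1) * (x - y)"
      using yx a by simp
    then show ?thesis using c(3) yx a by (simp add: algebra_simps)
  qed
qed

lemma powr_penalty_argmax:
  fixes a w x :: real
  assumes a: "a > 1" and x: "x \<ge> 0"
  defines "p \<equiv> max 0 ((a - 1) * w) powr (1 / (a - 1))"
    and "\<kappa> \<equiv> 1 / (a * (a - 1))"
  shows "x * w - \<kappa> * x powr a \<le> p * w - \<kappa> * p powr a"
    and "x \<noteq> p \<Longrightarrow> x * w - \<kappa> * x powr a < p * w - \<kappa> * p powr a"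
proof -
  have \<kappa>: "\<kappa> > 0" using a unfolding \<kappa>_def by simp
  have "x * w - \<kappa> * x powr a \<le> p * w - \<kappa> * p powr a \<and>
        (x \<noteq> p \<longrightarrow> x * w - \<kappa> * x powr a < p * w - \<kappa> * p powr a)"
  proof (cases "w \<le> 0")
    case True
    then have "p = 0" using a by (simp add: p_def mult_nonneg_nonpos)
    moreover have "x * w \<le> 0" using True x by (simp add: mult_nonneg_nonpos)
    moreover have "\<kappa> * x powr a \<ge> 0" "x \<noteq> 0 \<Longrightarrow> \<kappa> * x powr a > 0"
      using \<kappa> x by simp_all
    ultimately show ?thesis by force
  next
    case False
    then have u: "(a - 1) * w > 0" "w > 0" using a by simp_all
    then have p: "p > 0" "p powr (a - 1) = (a - 1) * w"
      using a by (simp_all add: p_def powr_powr)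
    have "w = \<kappa> * a * p powr (a - 1)"
      unfolding p(2) \<kappa>_def using a by (simp add: field_simps)
    then have "x * w - \<kappa> * x powr a - (p * w - \<kappa> * p powr a)
             = \<kappa> * (a * p powr (a - 1) * (x - p) - (x powr a - p powr a))"
      by (simp add: algebra_simps)
    moreover have "x \<noteq> p \<Longrightarrow> \<kappa> * (a * p powr (a - 1) * (x - p) - (x powr a - p powr a)) < 0"
      using powr_tangent_less[OF a p(1) x] \<kappa> by (simp add: mult_pos_neg)
    ultimately show ?thesis by (cases "x = p") auto
  qed
  then show "x * w - \<kappa> * x powr a \<le> p * w - \<kappa> * p powr a"
    and "x \<noteq> p \<Longrightarrow> x * w - \<kappa> * x powr a < p * w - \<kappa> * p powr a"
    by blast+
qed

text \<open>On the simplex, adding the constant \<open>\<tau> (1 - \<Sum>\<^sub>i q\<^sub>i)\<close> decouples the objective into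
  independent one-dimensional problems.\<close>

lemma entmax_objective_shift:
  fixes z q :: "'n::finite \<Rightarrow> real"
  assumes "a > 1" "q \<in> prob_simplex"
  shows "entmax_objective a z q
       = (\<Sum>i\<in>UNIV. q i * (z i - \<tau>) - 1 / (a * (a - 1)) * q i powr a) + \<tau> + 1 / (a * (a - 1))"
  using assms
  by (simp add: entmax_objective_def tsallis_def prob_simplex_def algebra_simps sum.distrib
      sum_subtractf flip: sum_distrib_left sum_divide_distrib)

definition threshold_map :: "real \<Rightarrow> ('n \<Rightarrow> real) \<Rightarrow> real \<Rightarrow> 'n \<Rightarrow> real" where
  "threshold_map a z \<tau> i = max 0 ((a - 1) * (z i - \<tau>)) powr (1 / (a - 1))"

lemma entmax_eq_threshold_map:
  fixes z :: "'n::finite \<Rightarrow> real"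
  assumes a: "a > 1" and p: "threshold_map a z \<tau> \<in> prob_simplex"
  shows "entmax a z = threshold_map a z \<tau>"
proof (rule entmax_eqI[OF p])
  let ?p = "threshold_map a z \<tau>"
  let ?\<psi> = "\<lambda>x i. x * (z i - \<tau>) - 1 / (a * (a - 1)) * x powr a"
  fix q assume q: "q \<in> prob_simplex" "q \<noteq> ?p"
  then obtain k where k: "q k \<noteq> ?p k" by auto
  have q0: "q i \<ge> 0" for i using q by (simp add: prob_simplex_def)
  have "(\<Sum>i\<in>UNIV. ?\<psi> (q i) i) < (\<Sum>i\<in>UNIV. ?\<psi> (?p i) i)"
  proof (rule sum_strict_mono_ex1)
    show "\<forall>i\<in>UNIV. ?\<psi> (q i) i \<le> ?\<psi> (?p i) i"
      using powr_penalty_argmax(1)[OF a q0] by (simp add: threshold_map_def)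
    show "\<exists>i\<in>UNIV. ?\<psi> (q i) i < ?\<psi> (?p i) i"
      using powr_penalty_argmax(2)[OF a q0[of k]] k by (auto simp: threshold_map_def)
  qed simp
  then show "entmax_objective a z q < entmax_objective a z ?p"
    using entmax_objective_shift[OF a q(1), of z \<tau>] entmax_objective_shift[OF a p, of z \<tau>]
    by simp
qed

lemma threshold_map_in_simplex:
  fixes z :: "'n::finite \<Rightarrow> real"
  assumes a: "a > 1"
  obtains \<tau> where "threshold_map a z \<tau> \<in> prob_simplex"
proof -
  define s where "s \<tau> = (\<Sum>i\<in>UNIV. threshold_map a z \<tau> i)" for \<tau>
  have "continuous_on A s" for A
    unfolding s_def threshold_map_def
    by (intro continuous_on_sum continuous_on_powr') (use a in \<open>auto intro!: continuous_intros\<close>)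
  define M where "M = Max (range z)"
  obtain m where m: "z m = M"
    unfolding M_def by (metis Max_in UNIV_not_empty finite finite_imageI image_iff image_is_empty)
  have "z i \<le> M" for i unfolding M_def by simp
  then have "s M = 0"
    using a by (simp add: s_def threshold_map_def mult_nonneg_nonpos)
  moreover have "s (M - 1 / (a - 1)) \<ge> 1"
  proof -
    have "threshold_map a z (M - 1 / (a - 1)) m = 1"
      using a m by (simp add: threshold_map_def)
    moreover have "threshold_map a z (M - 1 / (a - 1)) m \<le> s (M - 1 / (a - 1))"
      unfolding s_def by (rule member_le_sum) (auto simp: threshold_map_def)
    ultimately show ?thesis by linarith
  qed
  moreover note \<open>continuous_on {M - 1 / (a - 1)..M} s\<close>
  ultimately obtain \<tau> where "s \<tau> = 1"
    using IVT2'[of s M 1 "M - 1 / (a - 1)"] a by auto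
  then show ?thesis
    using that by (simp add: s_def prob_simplex_def threshold_map_def)
qed

lemma entmax_in_simplex:
  fixes z :: "'n::finite \<Rightarrow> real"
  assumes "a \<ge> 1"
  shows "entmax a z \<in> prob_simplex"
proof (cases "a = 1")
  case True
  have "(\<Sum>j\<in>UNIV. exp (z j)) > 0" by (intro sum_pos) auto
  then show ?thesis
    using True by (simp add: entmax_one prob_simplex_def flip: sum_divide_distrib)
next
  case False
  with assms have "a > 1" by simp
  then show ?thesis
    using threshold_map_in_simplex entmax_eq_threshold_map by metis
qed

lemma entmax_nonneg: "a \<ge> 1 \<Longrightarrow> entmax a z i \<ge> 0"
  using entmax_in_simplex[of a z] by (simp add: prob_simplex_def)

lemma entmax_sum_eq_1: "a \<ge> 1 \<Longrightarrow> (\<Sum>i\<in>UNIV. entmax a z i) = 1"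
  using entmax_in_simplex[of a z] by (simp add: prob_simplex_def)

lemma entmax_powr_diff:
  fixes z :: "'n::finite \<Rightarrow> real"
  assumes a: "a > 1" and "entmax a z i > 0" "entmax a z j > 0"
  shows "entmax a z i powr (a - 1) - entmax a z j powr (a - 1) = (a - 1) * (z i - z j)"
proof -
  obtain \<tau> where \<tau>: "entmax a z = threshold_map a z \<tau>"
    using threshold_map_in_simplex[OF a] entmax_eq_threshold_map[OF a] by metis
  have "entmax a z k powr (a - 1) = (a - 1) * (z k - \<tau>)" if "entmax a z k > 0" for k
  proof -
    have "(a - 1) * (z k - \<tau>) > 0"
      using that by (cases "(a - 1) * (z k - \<tau>) > 0") (auto simp: \<tau> threshold_map_def)
    then show ?thesis
      using a by (simp add: \<tau> threshold_map_def powr_powr)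
  qed
  from this[OF assms(2)] this[OF assms(3)] show ?thesis by (simp add: algebra_simps)
qed

lemma entmax_one_pos: "entmax 1 z i > 0"
  by (simp add: entmax_one sum_pos)

lemma ln_entmax_one_diff: "ln (entmax 1 z i) - ln (entmax 1 z j) = z i - z j"
proof -
  have "(\<Sum>j\<in>UNIV. exp (z j)) > 0" by (intro sum_pos) auto
  then show ?thesis by (simp add: entmax_one ln_div)
qed

section \<open>The derivative for \<open>\<alpha> > 1\<close>\<close>

lemma DERIV_eq_0_at_zero_of_nonneg:
  fixes f :: "real \<Rightarrow> real"
  assumes "DERIV f x :> D" "f x = 0" "eventually (\<lambda>y. f y \<ge> 0) (nhds x)"
  shows "D = 0"
proof -
  obtain d where "d > 0" "\<forall>y. dist y x < d \<longrightarrow> f y \<ge> 0"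
    using assms(3) by (auto simp: eventually_nhds_metric)
  then show ?thesis
    using DERIV_local_min[OF assms(1), of d] assms(2) by (simp add: dist_real_def abs_minus_commute)
qed

lemma DERIV_eventually_const_eq_0:
  fixes f :: "real \<Rightarrow> real"
  assumes "DERIV f x :> D" "eventually (\<lambda>y. f y = c) (nhds x)"
  shows "D = 0"
proof -
  have "DERIV (\<lambda>_. c) x :> D"
    using assms(1) by (subst (asm) DERIV_cong_ev[OF refl assms(2) refl])
  then show ?thesis using DERIV_const DERIV_unique by blast
qed

lemma entmax_deriv_sum_eq_0:
  fixes z :: "'n::finite \<Rightarrow> real"
  assumes "\<alpha> \<ge> 1"
    and D: "\<And>k. ((\<lambda>a. entmax a z k) has_real_derivative D k) (at \<alpha> within {1..})"
  shows "(\<Sum>k\<in>UNIV. D k) = 0"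
proof -
  have "((\<lambda>a. \<Sum>k\<in>UNIV. entmax a z k) has_real_derivative (\<Sum>k\<in>UNIV. D k)) (at \<alpha> within {1..})"
    by (rule DERIV_sum) (rule D)
  then have "((\<lambda>a. 1) has_real_derivative (\<Sum>k\<in>UNIV. D k)) (at \<alpha> within {1..})"
    by (rule has_field_derivative_transform_within[of _ _ _ _ 1]) (use assms in \<open>auto simp: entmax_sum_eq_1\<close>)
  moreover have "at \<alpha> within {1..} \<noteq> bot"
  proof -
    have "at_right \<alpha> \<le> at \<alpha> within {1..}"
      using assms(1) by (intro at_le) auto
    then show ?thesis using trivial_limit_at_right_real bot_unique by metis
  qed
  ultimately show ?thesis
    using has_field_derivative_unique DERIV_const by blast
qed

lemma entmax_powr_deriv_diff:
  fixes z :: "'n::finite \<Rightarrow> real"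
  assumes a: "\<alpha> > 1" and D: "\<And>k. ((\<lambda>a. entmax a z k) has_real_derivative D k) (at \<alpha>)"
  defines "p \<equiv> entmax \<alpha> z"
  assumes "p i > 0" "p j > 0"
  shows "p i powr (\<alpha> - 1) * (ln (p i) + D i * (\<alpha> - 1) / p i)
       - p j powr (\<alpha> - 1) * (ln (p j) + D j * (\<alpha> - 1) / p j) = z i - z j"
proof -
  have pos: "eventually (\<lambda>a. entmax a z k > 0) (nhds \<alpha>)" if "p k > 0" for k
  proof -
    have "((\<lambda>a. entmax a z k) \<longlongrightarrow> p k) (nhds \<alpha>)"
      using DERIV_isCont[OF D[of k]] unfolding p_def isCont_def
      by (rule tendsto_at_iff_tendsto_nhds[THEN iffD1])
    then show ?thesis using that by (rule order_tendstoD)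
  qed
  have powr_deriv: "((\<lambda>a. entmax a z k powr (a - 1)) has_real_derivative
      p k powr (\<alpha> - 1) * (ln (p k) + D k * (\<alpha> - 1) / p k)) (at \<alpha>)" if "p k > 0" for k
  proof -
    have "((\<lambda>a. a - 1) has_real_derivative 1) (at \<alpha>)"
      by (auto intro!: derivative_eq_intros)
    from has_real_derivative_powr'[OF D[of k] this] that show ?thesis
      by (simp add: p_def algebra_simps)
  qed
  let ?g = "\<lambda>a. entmax a z i powr (a - 1) - entmax a z j powr (a - 1) - (a - 1) * (z i - z j)"
  let ?D = "p i powr (\<alpha> - 1) * (ln (p i) + D i * (\<alpha> - 1) / p i)
       - p j powr (\<alpha> - 1) * (ln (p j) + D j * (\<alpha> - 1) / p j) - (z i - z j)"
  have "DERIV ?g \<alpha> :> ?D"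
    using powr_deriv assms by (auto intro!: derivative_eq_intros)
  moreover have "eventually (\<lambda>a. a > 1) (nhds \<alpha>)"
    using eventually_nhds_in_open[of "{1<..}" \<alpha>] a by simp
  then have "eventually (\<lambda>a. ?g a = 0) (nhds \<alpha>)"
    using pos[OF assms(4)] pos[OF assms(5)] by eventually_elim (simp add: entmax_powr_diff)
  ultimately have "?D = 0" by (rule DERIV_eventually_const_eq_0)
  then show ?thesis by simp
qed

lemma entmax_has_pos_coord:
  fixes z :: "'n::finite \<Rightarrow> real"
  assumes "a \<ge> 1"
  obtains i where "entmax a z i > 0"
proof -
  have "\<exists>i. entmax a z i > 0"
  proof (rule ccontr)
    assume "\<not> (\<exists>i. entmax a z i > 0)"
    then have "entmax a z i = 0" for i
      using entmax_nonneg[OF assms, of z i] by (meson antisym not_less)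
    then show False using entmax_sum_eq_1[OF assms, of z] by simp
  qed
  then show ?thesis using that by blast
qed

lemma entmax_deriv_gt1_on_support:
  fixes z :: "'n::finite \<Rightarrow> real"
  assumes a: "\<alpha> > 1" and D: "\<And>k. ((\<lambda>a. entmax a z k) has_real_derivative D k) (at \<alpha>)"
  defines "p \<equiv> entmax \<alpha> z"
  obtains c where
    "\<And>k. p k > 0 \<Longrightarrow> D k * (\<alpha> - 1) = c * p k powr (2 - \<alpha>) - p k * ln (p k) + p k / (\<alpha> - 1)"
proof -
  \<comment> \<open>\<open>C k\<close> is the \<open>\<alpha>\<close>-derivative of \<open>p\<^sub>k\<^bsup>\<alpha>-1\<^esup>\<close> minus \<open>p\<^sub>k\<^bsup>\<alpha>-1\<^esup> / (\<alpha> - 1)\<close>; by the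
    stationarity condition and its derivative, both terms differ by \<open>z\<^sub>i - z\<^sub>j\<close> between two
    support points, so \<open>C\<close> is constant on the support.\<close>
  define C where
    "C k = p k powr (\<alpha> - 1) * (ln (p k) + D k * (\<alpha> - 1) / p k) - p k powr (\<alpha> - 1) / (\<alpha> - 1)" for k
  have C_eq: "C i = C j" if "p i > 0" "p j > 0" for i j
  proof -
    have "z i - z j = (p i powr (\<alpha> - 1) - p j powr (\<alpha> - 1)) / (\<alpha> - 1)"
      using entmax_powr_diff[OF a, of z i j] that a unfolding p_def by (simp add: field_simps)
    then show ?thesis
      using entmax_powr_deriv_diff[OF a D that[unfolded p_def]]
      unfolding C_def p_def by (simp add: diff_divide_distrib)
  qed
  obtain i0 where i0: "p i0 > 0"
    using entmax_has_pos_coord[of \<alpha> z] a unfolding p_def by force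
  have "D k * (\<alpha> - 1) = C i0 * p k powr (2 - \<alpha>) - p k * ln (p k) + p k / (\<alpha> - 1)"
    if k: "p k > 0" for k
  proof -
    have pk: "p k powr (\<alpha> - 1) * p k powr (2 - \<alpha>) = p k"
      using k by (simp flip: powr_add)
    have "C i0 * p k powr (2 - \<alpha>) = C k * p k powr (2 - \<alpha>)"
      using C_eq[OF i0 k] by simp
    also have "\<dots> = (p k powr (\<alpha> - 1) * p k powr (2 - \<alpha>)) * (ln (p k) + D k * (\<alpha> - 1) / p k)
          - (p k powr (\<alpha> - 1) * p k powr (2 - \<alpha>)) / (\<alpha> - 1)"
      unfolding C_def by (simp only: left_diff_distrib) (simp add: algebra_simps)
    also have "\<dots> = p k * ln (p k) + D k * (\<alpha> - 1) - p k / (\<alpha> - 1)"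
      unfolding pk using k by (simp add: field_simps)
    finally show ?thesis by simp
  qed
  then show ?thesis by (rule that)
qed

lemma entmax_deriv_gt1:
  fixes z :: "'n::finite \<Rightarrow> real"
  assumes a: "\<alpha> > 1"
    and D: "\<And>k. ((\<lambda>a. entmax a z k) has_real_derivative D k) (at \<alpha> within {1..})"
  defines "p \<equiv> entmax \<alpha> z"
  defines "S \<equiv> {i. p i > 0}"
  defines "W \<equiv> (\<Sum>j\<in>S. p j powr (2 - \<alpha>))"
  defines "H \<equiv> (\<Sum>j\<in>UNIV. - p j * ln (p j))"
  shows "D i = (p i - (if i \<in> S then p i powr (2 - \<alpha>) / W else 0)) / (\<alpha> - 1)^2
            + (- p i * ln (p i) - (if i \<in> S then p i powr (2 - \<alpha>) / W else 0) * H) / (\<alpha> - 1)"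
proof -
  have D_at: "((\<lambda>a. entmax a z k) has_real_derivative D k) (at \<alpha>)" for k
  proof -
    have "((\<lambda>a. entmax a z k) has_real_derivative D k) (at \<alpha> within {1<..})"
      by (rule DERIV_subset[OF D]) auto
    moreover have "at \<alpha> within {1<..} = at \<alpha>"
      using a by (intro at_within_open) auto
    ultimately show ?thesis by simp
  qed
  have p0: "p k = 0" if "k \<notin> S" for k
    using that entmax_nonneg[of \<alpha> z k] a by (simp add: p_def S_def)
  have D0: "D k = 0" if "p k = 0" for k
  proof (rule DERIV_eq_0_at_zero_of_nonneg[OF D_at])
    show "entmax \<alpha> z k = 0" using that by (simp add: p_def)
    have "eventually (\<lambda>a. a > 1) (nhds \<alpha>)"
      using eventually_nhds_in_open[of "{1<..}" \<alpha>] a by simp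
    then show "eventually (\<lambda>a. entmax a z k \<ge> 0) (nhds \<alpha>)"
      by eventually_elim (simp add: entmax_nonneg)
  qed
  obtain c where c: "\<And>k. p k > 0 \<Longrightarrow>
      D k * (\<alpha> - 1) = c * p k powr (2 - \<alpha>) - p k * ln (p k) + p k / (\<alpha> - 1)"
    using entmax_deriv_gt1_on_support[OF a D_at, folded p_def] by blast
  have sum_S: "(\<Sum>k\<in>S. f k) = (\<Sum>k\<in>UNIV. f k)" if "\<And>k. p k = 0 \<Longrightarrow> f k = 0" for f
    by (rule sum.mono_neutral_left) (use that p0 in auto)
  have sum_p: "(\<Sum>k\<in>S. p k) = 1"
    using entmax_sum_eq_1[of \<alpha> z] a sum_S[of p] by (simp add: p_def)
  have sum_h: "(\<Sum>k\<in>S. - p k * ln (p k)) = H"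
    unfolding H_def by (rule sum_S) simp
  have "(\<Sum>k\<in>S. D k * (\<alpha> - 1))
      = (\<Sum>k\<in>S. c * p k powr (2 - \<alpha>) + - p k * ln (p k) + p k / (\<alpha> - 1))"
    by (intro sum.cong refl) (simp add: c S_def)
  also have "\<dots> = c * W + H + 1 / (\<alpha> - 1)"
    unfolding sum.distrib W_def sum_distrib_left[symmetric] sum_divide_distrib[symmetric] sum_p sum_h ..
  finally have "(\<Sum>k\<in>S. D k * (\<alpha> - 1)) = c * W + H + 1 / (\<alpha> - 1)" .
  moreover have "(\<Sum>k\<in>S. D k * (\<alpha> - 1)) = 0"
    using entmax_deriv_sum_eq_0[of \<alpha> z D] a D sum_S[of D] D0
    by (simp flip: sum_distrib_right)
  moreover have "W > 0"
  proof -
    obtain i0 where "p i0 > 0"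
      using entmax_has_pos_coord[of \<alpha> z] a unfolding p_def by force
    then show ?thesis unfolding W_def S_def by (intro sum_pos) auto
  qed
  ultimately have c_eq: "c = - (H + 1 / (\<alpha> - 1)) / W"
    by (simp add: field_simps)
  show ?thesis
  proof (cases "i \<in> S")
    case True
    then have "D i = (c * p i powr (2 - \<alpha>) - p i * ln (p i) + p i / (\<alpha> - 1)) / (\<alpha> - 1)"
      using c[of i] True a unfolding S_def by (simp add: eq_divide_eq)
    moreover have "(- (H + 1 / e) / W * w - q * ln q + q / e) / e
        = (q - w / W) / e^2 + (- q * ln q - w / W * H) / e" if "e > 0" for e w q :: real
      using that \<open>W > 0\<close> by (simp add: field_simps power2_eq_square)
    ultimately show ?thesis
      using True a unfolding c_eq by simp
  next
    case False
    then show ?thesis using p0 D0 by simp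
  qed
qed

section \<open>The right derivative at \<open>\<alpha> = 1\<close>\<close>

definition exp_quad_rem :: "real \<Rightarrow> real" where
  "exp_quad_rem x = (if x = 0 then 1 / 2 else (exp x - 1 - x) / x^2)"

lemma exp_eq_quad_rem: "exp x = 1 + x + x^2 * exp_quad_rem x"
  by (cases "x = 0") (simp_all add: exp_quad_rem_def field_simps)

lemma isCont_exp_quad_rem: "isCont exp_quad_rem 0"
proof -
  have "((\<lambda>x::real. (exp x - 1 - x) / x^2) \<longlongrightarrow> 1 / 2) (at 0)"
    by real_asymp
  moreover have "eventually (\<lambda>x. (exp x - 1 - x) / x^2 = exp_quad_rem x) (at (0::real))"
    by (auto simp: exp_quad_rem_def eventually_at_filter)
  ultimately have "(exp_quad_rem \<longlongrightarrow> 1 / 2) (at 0)"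
    by (rule Lim_transform_eventually)
  then show ?thesis by (simp add: isCont_def exp_quad_rem_def)
qed

lemma exp_quad_rem_diff_quotient:
  fixes \<epsilon> l m L M :: real
  assumes "\<epsilon> > 0" "exp (\<epsilon> * l) - exp (\<epsilon> * m) = \<epsilon> * (L - M)"
  shows "(l - L) / \<epsilon> - (m - M) / \<epsilon> = m^2 * exp_quad_rem (\<epsilon> * m) - l^2 * exp_quad_rem (\<epsilon> * l)"
proof -
  have "\<epsilon> * ((l - m - (L - M)) + \<epsilon> * (l^2 * exp_quad_rem (\<epsilon> * l) - m^2 * exp_quad_rem (\<epsilon> * m))) = 0"
    using assms(2) unfolding exp_eq_quad_rem[of "\<epsilon> * l"] exp_eq_quad_rem[of "\<epsilon> * m"]
    by (simp add: algebra_simps power2_eq_square)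
  then show ?thesis
    using assms(1) by (simp add: field_simps)
qed

lemma tendsto_exp_quad_rem:
  assumes "(f \<longlongrightarrow> 0) F"
  shows "((\<lambda>x. exp_quad_rem (f x)) \<longlongrightarrow> 1 / 2) F"
proof -
  have "((\<lambda>x. exp_quad_rem (f x)) \<longlongrightarrow> exp_quad_rem 0) F"
    by (rule isCont_tendsto_compose[OF isCont_exp_quad_rem assms])
  then show ?thesis by (simp add: exp_quad_rem_def)
qed

lemma entmax_log_diff_quotient:
  fixes z :: "'n::finite \<Rightarrow> real"
  assumes a: "a > 1" and "entmax a z i > 0" "entmax a z j > 0"
  shows "(ln (entmax a z i) - ln (entmax 1 z i)) / (a - 1) - (ln (entmax a z j) - ln (entmax 1 z j)) / (a - 1)
       = ln (entmax a z j)^2 * exp_quad_rem ((a - 1) * ln (entmax a z j))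
         - ln (entmax a z i)^2 * exp_quad_rem ((a - 1) * ln (entmax a z i))"
proof (rule exp_quad_rem_diff_quotient)
  show "a - 1 > 0" using a by simp
  have "entmax a z i \<noteq> 0" "entmax a z j \<noteq> 0" using assms by simp_all
  then show "exp ((a - 1) * ln (entmax a z i)) - exp ((a - 1) * ln (entmax a z j))
      = (a - 1) * (ln (entmax 1 z i) - ln (entmax 1 z j))"
    using entmax_powr_diff[OF assms] ln_entmax_one_diff[of z i j] by (simp add: powr_def mult.commute)
qed

lemma entmax_deriv_one_log_diff:
  fixes z :: "'n::finite \<Rightarrow> real"
  assumes D: "\<And>k. ((\<lambda>a. entmax a z k) has_real_derivative D k) (at_right 1)"
  defines "p \<equiv> entmax 1 z"
  shows "D i / p i - D j / p j = (ln (p j)^2 - ln (p i)^2) / 2"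
proof (rule tendsto_unique)
  let ?F = "at_right (1::real)"
  let ?l = "\<lambda>a k. ln (entmax a z k)"
  let ?q = "\<lambda>a k. (?l a k - ln (p k)) / (a - 1)"
  show "?F \<noteq> bot" by simp
  have p: "p k > 0" for k unfolding p_def by (rule entmax_one_pos)
  then have p_ne: "p k \<noteq> 0" for k by (metis less_irrefl)
  have lim: "((\<lambda>a. entmax a z k) \<longlongrightarrow> p k) ?F" for k
    using DERIV_continuous[OF D[of k]] unfolding continuous_within p_def .
  have "((\<lambda>a. ?l a k) has_real_derivative D k / p k) ?F" for k
  proof -
    have "DERIV ln (entmax 1 z k) :> 1 / p k"
      using DERIV_ln_divide[OF p[of k]] by (simp add: p_def)
    from DERIV_chain2[OF this D[of k]] show ?thesis by simp
  qed
  then have "((\<lambda>a. ?q a k) \<longlongrightarrow> D k / p k) ?F" for k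
    by (simp add: has_field_derivative_iff p_def)
  then show "((\<lambda>a. ?q a i - ?q a j) \<longlongrightarrow> D i / p i - D j / p j) ?F"
    by (intro tendsto_diff)
  have "((\<lambda>a. a - 1) \<longlongrightarrow> 1 - 1) ?F"
    by (intro tendsto_intros)
  then have "((\<lambda>a. (a - 1) * ?l a k) \<longlongrightarrow> 0 * ln (p k)) ?F" for k
    by (intro tendsto_mult tendsto_ln lim) (simp_all add: p_ne)
  then have "((\<lambda>a. ?l a j ^ 2 * exp_quad_rem ((a - 1) * ?l a j) - ?l a i ^ 2 * exp_quad_rem ((a - 1) * ?l a i))
      \<longlongrightarrow> ln (p j) ^ 2 * (1 / 2) - ln (p i) ^ 2 * (1 / 2)) ?F"
    by (intro tendsto_intros lim tendsto_exp_quad_rem) (simp_all add: p_ne)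
  moreover have "eventually (\<lambda>a. ?l a j ^ 2 * exp_quad_rem ((a - 1) * ?l a j)
      - ?l a i ^ 2 * exp_quad_rem ((a - 1) * ?l a i) = ?q a i - ?q a j) ?F"
  proof -
    have "eventually (\<lambda>a. \<forall>k. entmax a z k > 0) ?F"
      by (rule eventually_all_finite) (use order_tendstoD(1)[OF lim p] in blast)
    with eventually_at_right_less[of 1] show ?thesis
      by eventually_elim (simp add: entmax_log_diff_quotient p_def)
  qed
  ultimately have "((\<lambda>a. ?q a i - ?q a j) \<longlongrightarrow> ln (p j) ^ 2 * (1 / 2) - ln (p i) ^ 2 * (1 / 2)) ?F"
    by (rule Lim_transform_eventually)
  then show "((\<lambda>a. ?q a i - ?q a j) \<longlongrightarrow> (ln (p j)^2 - ln (p i)^2) / 2) ?F"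
    by (simp add: diff_divide_distrib)
qed

lemma entmax_deriv_one:
  fixes z :: "'n::finite \<Rightarrow> real"
  assumes D: "\<And>k. ((\<lambda>a. entmax a z k) has_real_derivative D k) (at 1 within {1..})"
  defines "p \<equiv> entmax 1 z"
  shows "D i = ((- p i * ln (p i)) * ln (p i) - p i * (\<Sum>j\<in>UNIV. (- p j * ln (p j)) * ln (p j))) / 2"
proof -
  have "((\<lambda>a. entmax a z k) has_real_derivative D k) (at_right 1)" for k
    by (rule DERIV_subset[OF D]) auto
  from entmax_deriv_one_log_diff[OF this, folded p_def]
  have log_diff: "D k / p k - D j / p j = (ln (p j)^2 - ln (p k)^2) / 2" for k j .
  define c where "c = D i / p i + ln (p i)^2 / 2"
  have D_eq: "D j = p j * (c - ln (p j)^2 / 2)" for j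
    using log_diff[of i j] entmax_one_pos[of z i] entmax_one_pos[of z j] by (simp add: c_def p_def field_simps)
  have "0 = (\<Sum>j\<in>UNIV. p j * (c - ln (p j)^2 / 2))"
    using entmax_deriv_sum_eq_0[of 1 z D] D by (simp add: D_eq)
  also have "\<dots> = (\<Sum>j\<in>UNIV. c * p j - p j * ln (p j)^2 / 2)"
    by (simp add: algebra_simps)
  also have "\<dots> = c * (\<Sum>j\<in>UNIV. p j) - (\<Sum>j\<in>UNIV. p j * ln (p j)^2) / 2"
    by (simp add: sum_subtractf sum_distrib_left sum_divide_distrib)
  also have "\<dots> = c - (\<Sum>j\<in>UNIV. p j * ln (p j)^2) / 2"
    using entmax_sum_eq_1[of 1 z] by (simp add: p_def)
  finally have c_val: "c = (\<Sum>j\<in>UNIV. p j * ln (p j)^2) / 2" by simp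
  have "(\<Sum>j\<in>UNIV. (- p j * ln (p j)) * ln (p j)) = - (\<Sum>j\<in>UNIV. p j * ln (p j)^2)"
    by (simp add: power2_eq_square mult.assoc flip: sum_negf)
  then show ?thesis
    using D_eq[of i] unfolding c_val by (simp add: field_simps power2_eq_square)
qed

theorem proposition1:
  fixes z :: "'n::finite \<Rightarrow> real" and \<alpha> :: real
  assumes "\<alpha> \<ge> 1"
    and "\<forall>i. (\<lambda>a. entmax a z i) differentiable (at \<alpha> within {1..})"
  shows "let p = entmax \<alpha> z;
             S = {i. p i > 0};
             pt = (\<lambda>i. if i \<in> S then p i powr (2 - \<alpha>) / (\<Sum>j\<in>S. p j powr (2 - \<alpha>)) else 0);
             h = (\<lambda>i. - p i * ln (p i));
             g = (\<lambda>i. if \<alpha> > 1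
                     then (p i - pt i) / (\<alpha> - 1)^2 + (h i - pt i * (\<Sum>j\<in>UNIV. h j)) / (\<alpha> - 1)
                     else (h i * ln (p i) - p i * (\<Sum>j\<in>UNIV. h j * ln (p j))) / 2)
         in \<forall>i. ((\<lambda>a. entmax a z i) has_real_derivative g i) (at \<alpha> within {1..})"
proof -
  obtain D where D: "\<And>k. ((\<lambda>a. entmax a z k) has_real_derivative D k) (at \<alpha> within {1..})"
    using assms(2) unfolding real_differentiable_def by metis
  show ?thesis
  proof (cases "\<alpha> > 1")
    case True
    show ?thesis
      unfolding Let_def if_P[OF True] using D[unfolded entmax_deriv_gt1[OF True D]] by blast
  next
    case False
    with assms(1) have "\<alpha> = 1" by simp
    with D have D1: "\<And>k. ((\<lambda>a. entmax a z k) has_real_derivative D k) (at 1 within {1..})"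
      by simp
    show ?thesis
      unfolding Let_def \<open>\<alpha> = 1\<close> using D1[unfolded entmax_deriv_one[OF D1]] by simp
  qed
qed

end
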